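(* For any integers $M,s>0$ there exists $\varepsilon_1(M,s)>0$ such that for every $\varepsilon<\varepsilon_1(M,s)$ and every $L\le M$, there exist linear combinations of the first $L$ eigenfunctions of the Laplacian on $G(s,\varepsilon)$ having exactly $L-1+(L-1)(s-1)$ zeroes on the small edges.
   Context: $G(s,\varepsilon)$ is the star graph with one central vertex, one edge of length $1$ and $s$ edges ("small edges") of length $\varepsilon$, each joining the central vertex to a degree-one vertex. The Laplacian $-\frac{d^2}{dx^2}$ acts edgewise with Dirichlet conditions at the degree-one vertices and Neumann–Kirchhoff conditions at the central vertex (continuity and vanishing sum of outgoing derivatives); eigenvalues are ordered increasingly with multiplicity and $f_1,f_2,\dots$ are corresponding $L^2$-orthogonal eigenfunctions. Zeroes at the degree-one vertices are not counted. *)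

theory Defs
  imports "HOL-Analysis.Analysis"
begin

text \<open>A function on the star graph G(s,eps): the long edge is parametrised by [0,1]
  (0 = degree-one vertex, 1 = central vertex); small edge j (j < s) is parametrised
  by [0,eps] (0 = degree-one vertex, eps = central vertex).\<close>
type_synonym gfun = "(real \<Rightarrow> real) \<times> (nat \<Rightarrow> real \<Rightarrow> real)"

definition graph_zero :: "nat \<Rightarrow> real \<Rightarrow> gfun \<Rightarrow> bool" where
  "graph_zero s eps g \<longleftrightarrow>
     (\<forall>x\<in>{0..1}. fst g x = 0) \<and> (\<forall>j<s. \<forall>x\<in>{0..eps}. snd g j x = 0)"

definition graph_eq :: "nat \<Rightarrow> real \<Rightarrow> gfun \<Rightarrow> gfun \<Rightarrow> bool" where
  "graph_eq s eps g h \<longleftrightarrow>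
     (\<forall>x\<in>{0..1}. fst g x = fst h x) \<and> (\<forall>j<s. \<forall>x\<in>{0..eps}. snd g j x = snd h j x)"

text \<open>Eigenfunction of -d^2/dx^2 with Dirichlet conditions at degree-one vertices and
  Neumann-Kirchhoff conditions at the central vertex (outgoing derivatives at the
  centre are -u'(1) and -v_j'(eps)).\<close>
definition is_eigenfunction :: "nat \<Rightarrow> real \<Rightarrow> real \<Rightarrow> gfun \<Rightarrow> bool" where
  "is_eigenfunction s eps lam g \<longleftrightarrow>
     (\<exists>u' v'.
        (\<forall>x\<in>{0..1}. (fst g has_real_derivative u' x) (at x within {0..1}) \<and>
                     (u' has_real_derivative (- lam * fst g x)) (at x within {0..1})) \<and>
        (\<forall>j<s. \<forall>x\<in>{0..eps}. (snd g j has_real_derivative v' j x) (at x within {0..eps}) \<and>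
                     (v' j has_real_derivative (- lam * snd g j x)) (at x within {0..eps})) \<and>
        u' 1 + (\<Sum>j<s. v' j eps) = 0) \<and>
     fst g 0 = 0 \<and> (\<forall>j<s. snd g j 0 = 0 \<and> snd g j eps = fst g 1) \<and>
     \<not> graph_zero s eps g"

definition graph_inner :: "nat \<Rightarrow> real \<Rightarrow> gfun \<Rightarrow> gfun \<Rightarrow> real" where
  "graph_inner s eps g h =
     integral {0..1} (\<lambda>x. fst g x * fst h x) +
     (\<Sum>j<s. integral {0..eps} (\<lambda>x. snd g j x * snd h j x))"

definition gsum :: "(nat \<Rightarrow> real) \<Rightarrow> (nat \<Rightarrow> gfun) \<Rightarrow> nat set \<Rightarrow> gfun" where
  "gsum c f K = ((\<lambda>x. \<Sum>k\<in>K. c k * fst (f k) x), (\<lambda>j x. \<Sum>k\<in>K. c k * snd (f k) j x))"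

text \<open>lam 0 \<le> lam 1 \<le> ... are the eigenvalues in increasing order with multiplicity and
  f 0, f 1, ... corresponding L2-orthogonal eigenfunctions (f k is the paper's f_(k+1)).\<close>
definition eigen_sequence :: "nat \<Rightarrow> real \<Rightarrow> (nat \<Rightarrow> real) \<Rightarrow> (nat \<Rightarrow> gfun) \<Rightarrow> bool" where
  "eigen_sequence s eps lam f \<longleftrightarrow>
     mono lam \<and>
     (\<forall>k. is_eigenfunction s eps (lam k) (f k)) \<and>
     (\<forall>k k'. k \<noteq> k' \<longrightarrow> graph_inner s eps (f k) (f k') = 0) \<and>
     (\<forall>\<mu> g. is_eigenfunction s eps \<mu> g \<longrightarrow>
        (\<exists>K c. finite K \<and> K \<subseteq> {k. lam k = \<mu>} \<and> graph_eq s eps g (gsum c f K)))"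

datatype gpoint = Center | SmallPt nat real

text \<open>Zeroes on the small edges (closed at the central vertex, which is counted once;
  degree-one vertices excluded).\<close>
definition small_zeros :: "nat \<Rightarrow> real \<Rightarrow> gfun \<Rightarrow> gpoint set" where
  "small_zeros s eps g =
     {SmallPt j x | j x. j < s \<and> 0 < x \<and> x < eps \<and> snd g j x = 0} \<union>
     (if fst g 1 = 0 then {Center} else {})"

end

theory Submission
  imports Defs
begin

text \<open>For \<open>eps < 1 / (2 M)\<close> the secular equation \<open>cos r sin (r eps) + s sin r cos (r eps) = 0\<close>
  has a root in \<open>(n pi - pi / 2, n pi)\<close> for every \<open>n \<le> M\<close>, so the first \<open>M\<close> eigenvalues lie
  below \<open>(M pi)\<^sup>2\<close>: their frequencies \<open>k i\<close> satisfy \<open>k i eps < pi / 2\<close>.  Solving the ODE edgewise,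
  each such eigenfunction is a multiple of \<open>sin (k i x)\<close> on every edge, with the same multiple on
  all small edges, and orthogonality forces the \<open>k i\<close> to be distinct.  A nontrivial combination of
  \<open>L\<close> sines with distinct frequencies \<open>k i < pi / a\<close> has fewer than \<open>L\<close> zeros in \<open>(0, a)\<close> (Rolle,
  applied to its quotient by one of the sines and to the Wronskian).  Hence the combination
  interpolating \<open>L - 1\<close> zeros in \<open>(0, eps)\<close> vanishes nowhere else on \<open>(0, eps]\<close>: it has \<open>L - 1\<close>
  zeros on each small edge and none at the centre.\<close>

lemma oscillator_zero_initial_data:
  fixes w v :: "real \<Rightarrow> real"
  assumes deriv: "\<forall>y\<in>{0..a}. (w has_real_derivative v y) (at y within {0..a}) \<and>
                     (v has_real_derivative (- lam * w y)) (at y within {0..a})"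
    and w0: "w 0 = 0" and v0: "v 0 = 0" and x: "x \<in> {0..a}"
  shows "w x = 0 \<and> v x = 0"
proof -
  \<comment> \<open>Gronwall: the weighted energy \<open>G\<close> is nonincreasing and starts at \<open>0\<close>.\<close>
  define c where "c = \<bar>1 - lam\<bar> + 1"
  define G where "G y = (w y ^ 2 + v y ^ 2) * exp (- c * y)" for y
  define G' where "G' y = (2 * ((1 - lam) * (w y * v y)) - c * (w y ^ 2 + v y ^ 2)) * exp (- c * y)" for y
  have G_deriv: "(G has_real_derivative G' y) (at y within {0..a})" if "y \<in> {0..a}" for y
  proof -
    have "(G has_real_derivative (2 * w y * v y + 2 * v y * (- lam * w y)) * exp (- c * y)
           + (w y ^ 2 + v y ^ 2) * (exp (- c * y) * (- c))) (at y within {0..a})"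
      unfolding G_def using deriv that by (auto intro!: derivative_eq_intros)
    thus ?thesis unfolding G'_def by (simp add: algebra_simps)
  qed
  have G'_nonpos: "G' y \<le> 0" for y
  proof -
    have "(1 - lam) * (w y * v y) \<le> \<bar>1 - lam\<bar> * (\<bar>w y\<bar> * \<bar>v y\<bar>)"
      by (metis abs_ge_self abs_mult)
    hence "2 * ((1 - lam) * (w y * v y)) \<le> 2 * (\<bar>1 - lam\<bar> * (\<bar>w y\<bar> * \<bar>v y\<bar>))"
      by simp
    also have "\<dots> = \<bar>1 - lam\<bar> * (2 * \<bar>w y\<bar> * \<bar>v y\<bar>)"
      by (simp only: mult_ac)
    also have "\<dots> \<le> \<bar>1 - lam\<bar> * (w y ^ 2 + v y ^ 2)"
      using sum_squares_bound[of "\<bar>w y\<bar>" "\<bar>v y\<bar>"] by (intro mult_left_mono) auto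
    also have "\<dots> \<le> c * (w y ^ 2 + v y ^ 2)" unfolding c_def by (intro mult_right_mono) auto
    finally show ?thesis unfolding G'_def by (simp add: mult_nonpos_nonneg)
  qed
  have "G x \<le> G 0"
  proof (rule DERIV_nonpos_imp_decreasing_open[of 0 x G])
    show "0 \<le> x" using x by simp
    show "\<exists>l. (G has_real_derivative l) (at y) \<and> l \<le> 0" if "0 < y" "y < x" for y
    proof -
      have "at y within {0..a} = at y" using that x by (intro at_within_Icc_at) auto
      thus ?thesis using G_deriv[of y] G'_nonpos[of y] that x by auto
    qed
    have "continuous_on {0..a} G" using G_deriv by (rule DERIV_continuous_on)
    thus "continuous_on {0..x} G" by (rule continuous_on_subset) (use x in auto)
  qed
  hence "w x ^ 2 + v x ^ 2 \<le> 0" using w0 v0 unfolding G_def by (simp add: mult_le_0_iff)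
  thus ?thesis by (simp only: sum_power2_le_zero_iff)
qed

lemma oscillator_unique:
  fixes u u' S C :: "real \<Rightarrow> real"
  assumes deriv: "\<forall>y\<in>{0..a}. (u has_real_derivative u' y) (at y within {0..a}) \<and>
                     (u' has_real_derivative (- lam * u y)) (at y within {0..a})"
    and S: "\<And>y. (S has_real_derivative C y) (at y)" and C: "\<And>y. (C has_real_derivative (- lam * S y)) (at y)"
    and "S 0 = 0" "C 0 = 1" "u 0 = 0" and x: "x \<in> {0..a}"
  shows "u x = u' 0 * S x \<and> u' x = u' 0 * C x"
proof -
  define w where "w y = u y - u' 0 * S y" for y
  define v where "v y = u' y - u' 0 * C y" for y
  have "w x = 0 \<and> v x = 0"
  proof (rule oscillator_zero_initial_data[of a w v lam])
    show "\<forall>y\<in>{0..a}. (w has_real_derivative v y) (at y within {0..a}) \<and>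
        (v has_real_derivative - lam * w y) (at y within {0..a})"
    proof
      fix y assume y: "y \<in> {0..a}"
      have "(w has_real_derivative u' y - u' 0 * C y) (at y within {0..a})"
        unfolding w_def using deriv y by (intro DERIV_diff DERIV_cmult DERIV_subset[OF S]) auto
      moreover have "(v has_real_derivative - lam * u y - u' 0 * (- lam * S y)) (at y within {0..a})"
        unfolding v_def using deriv y by (intro DERIV_diff DERIV_cmult DERIV_subset[OF C]) auto
      moreover have "- lam * u y - u' 0 * (- lam * S y) = - lam * w y"
        unfolding w_def by (simp add: algebra_simps)
      ultimately show "(w has_real_derivative v y) (at y within {0..a}) \<and>
          (v has_real_derivative - lam * w y) (at y within {0..a})"
        unfolding v_def by simp
    qed
  qed (use assms in \<open>simp_all add: w_def v_def\<close>)
  thus ?thesis unfolding w_def v_def by simp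
qed

lemma sin_oscillator:
  fixes k lam :: real
  assumes "k \<noteq> 0" "k * k = lam"
  shows "((\<lambda>x. sin (k * x) / k) has_real_derivative cos (k * x)) (at x)"
    and "((\<lambda>x. cos (k * x)) has_real_derivative - lam * (sin (k * x) / k)) (at x)"
  using assms by (auto intro!: derivative_eq_intros simp flip: assms(2))

lemma sinh_oscillator:
  fixes k lam :: real
  assumes "k \<noteq> 0" "k * k = - lam"
  shows "((\<lambda>x. sinh (k * x) / k) has_real_derivative cosh (k * x)) (at x)"
    and "((\<lambda>x. cosh (k * x)) has_real_derivative - lam * (sinh (k * x) / k)) (at x)"
  using assms by (auto intro!: derivative_eq_intros simp flip: assms(2))

lemma eigenfunction_fundamental_form:
  fixes S C :: "real \<Rightarrow> real"
  assumes ef: "is_eigenfunction s eps lam g" and eps: "0 < eps"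
    and S: "\<And>x. (S has_real_derivative C x) (at x)" and C: "\<And>x. (C has_real_derivative (- lam * S x)) (at x)"
    and "S 0 = 0" "C 0 = 1"
  obtains P Q where "\<forall>x\<in>{0..1}. fst g x = P * S x" "\<forall>j<s. \<forall>x\<in>{0..eps}. snd g j x = Q j * S x"
    "\<forall>j<s. Q j * S eps = P * S 1" "P * C 1 + (\<Sum>j<s. Q j * C eps) = 0" "P \<noteq> 0 \<or> (\<exists>j<s. Q j \<noteq> 0)"
proof -
  have dirichlet: "fst g 0 = 0" "\<forall>j<s. snd g j 0 = 0"
    and continuity: "\<forall>j<s. snd g j eps = fst g 1"
    and nonzero: "\<not> graph_zero s eps g"
    using ef unfolding is_eigenfunction_def by auto
  obtain u' v' where
    du: "\<forall>x\<in>{0..1}. (fst g has_real_derivative u' x) (at x within {0..1}) \<and>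
                     (u' has_real_derivative (- lam * fst g x)) (at x within {0..1})" and
    dv: "\<forall>j<s. \<forall>x\<in>{0..eps}. (snd g j has_real_derivative v' j x) (at x within {0..eps}) \<and>
                     (v' j has_real_derivative (- lam * snd g j x)) (at x within {0..eps})" and
    kirchhoff: "u' 1 + (\<Sum>j<s. v' j eps) = 0"
    using ef unfolding is_eigenfunction_def by blast
  have long: "fst g x = u' 0 * S x \<and> u' x = u' 0 * C x" if "x \<in> {0..1}" for x
    using oscillator_unique[OF du S C \<open>S 0 = 0\<close> \<open>C 0 = 1\<close> dirichlet(1) that] .
  have small: "snd g j x = v' j 0 * S x \<and> v' j x = v' j 0 * C x" if "j < s" "x \<in> {0..eps}" for j x
  proof (rule oscillator_unique[where u = "snd g j" and u' = "v' j", OF _ S C \<open>S 0 = 0\<close> \<open>C 0 = 1\<close> _ that(2)])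
    show "\<forall>y\<in>{0..eps}. (snd g j has_real_derivative v' j y) (at y within {0..eps}) \<and>
        (v' j has_real_derivative - lam * snd g j y) (at y within {0..eps})"
      using dv that(1) by simp
    show "snd g j 0 = 0" using dirichlet(2) that(1) by simp
  qed
  show thesis
  proof (rule that[of "u' 0" "\<lambda>j. v' j 0"])
    show long_S: "\<forall>x\<in>{0..1}. fst g x = u' 0 * S x" using long by blast
    show small_S: "\<forall>j<s. \<forall>x\<in>{0..eps}. snd g j x = v' j 0 * S x" using small by blast
    show "\<forall>j<s. v' j 0 * S eps = u' 0 * S 1"
      using long_S small_S continuity eps by simp
    have "(\<Sum>j<s. v' j eps) = (\<Sum>j<s. v' j 0 * C eps)"
      using small[of _ eps] eps by (intro sum.cong) auto
    thus "u' 0 * C 1 + (\<Sum>j<s. v' j 0 * C eps) = 0"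
      using long[of 1] kirchhoff by simp
    show "u' 0 \<noteq> 0 \<or> (\<exists>j<s. v' j 0 \<noteq> 0)"
    proof (rule ccontr)
      assume "\<not> (u' 0 \<noteq> 0 \<or> (\<exists>j<s. v' j 0 \<noteq> 0))"
      hence "graph_zero s eps g" using long_S small_S unfolding graph_zero_def by simp
      thus False using nonzero by contradiction
    qed
  qed
qed

lemma kirchhoff_positive_solution_trivial:
  fixes S C :: "real \<Rightarrow> real" and Q :: "nat \<Rightarrow> real"
  assumes "0 < S eps" "0 < S 1" "0 < C 1" "0 < C eps"
    and continuity: "\<forall>j<s. Q j * S eps = P * S 1" and kirchhoff: "P * C 1 + (\<Sum>j<s. Q j * C eps) = 0"
  shows "P = 0 \<and> (\<forall>j<s. Q j = 0)"
proof -
  have Q: "Q j = P * (S 1 / S eps)" if "j < s" for j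
    using continuity that \<open>0 < S eps\<close> by (simp add: field_simps)
  hence "P * (C 1 + real s * (S 1 / S eps * C eps)) = 0"
    using kirchhoff by (simp add: algebra_simps)
  moreover have "0 < C 1 + real s * (S 1 / S eps * C eps)"
    using assms by (intro add_pos_nonneg) auto
  ultimately show ?thesis using Q by simp
qed

lemma eigenvalue_pos:
  assumes ef: "is_eigenfunction s eps lam g" and eps: "0 < eps"
  shows "0 < lam"
proof (rule ccontr)
  assume "\<not> 0 < lam"
  then consider "lam = 0" | "lam < 0" by linarith
  thus False
  proof cases
    case 1
    have S: "\<And>x. ((\<lambda>x. x) has_real_derivative 1) (at x)"
      and C: "\<And>x. ((\<lambda>x. 1) has_real_derivative - lam * x) (at x)"
      using 1 by (auto intro!: derivative_eq_intros)
    obtain P Q where "\<forall>j<s. Q j * eps = P * 1" "P * 1 + (\<Sum>j<s. Q j * 1) = 0"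
      and nonzero: "P \<noteq> 0 \<or> (\<exists>j<s. Q j \<noteq> 0)"
      by (rule eigenfunction_fundamental_form[OF ef eps S C refl refl])
    hence "P = 0 \<and> (\<forall>j<s. Q j = 0)"
      using eps by (intro kirchhoff_positive_solution_trivial[of "\<lambda>x. x" eps "\<lambda>x. 1"]) simp_all
    with nonzero show False by blast
  next
    case 2
    define m where "m = sqrt (- lam)"
    have m: "0 < m" "m * m = - lam" using 2 m_def by auto
    have S: "\<And>x. ((\<lambda>x. sinh (m * x) / m) has_real_derivative cosh (m * x)) (at x)"
      and C: "\<And>x. ((\<lambda>x. cosh (m * x)) has_real_derivative - lam * (sinh (m * x) / m)) (at x)"
      using sinh_oscillator[of m lam] m by auto
    have S0: "sinh (m * 0) / m = 0" and C0: "cosh (m * 0) = 1" by simp_all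
    obtain P Q where "\<forall>j<s. Q j * (sinh (m * eps) / m) = P * (sinh (m * 1) / m)"
      "P * cosh (m * 1) + (\<Sum>j<s. Q j * cosh (m * eps)) = 0"
      and nonzero: "P \<noteq> 0 \<or> (\<exists>j<s. Q j \<noteq> 0)"
      by (rule eigenfunction_fundamental_form[OF ef eps S C S0 C0])
    hence "P = 0 \<and> (\<forall>j<s. Q j = 0)"
      using eps m by (intro kirchhoff_positive_solution_trivial[of "\<lambda>x. sinh (m * x) / m" eps "\<lambda>x. cosh (m * x)"])
        simp_all
    with nonzero show False by blast
  qed
qed

lemma eigenfunction_sin_form:
  assumes ef: "is_eigenfunction s eps lam g" and eps: "0 < eps"
    and sin_eps: "sin (sqrt lam * eps) \<noteq> 0"
  obtains P where "P \<noteq> 0" "sin (sqrt lam) \<noteq> 0" "\<forall>x\<in>{0..1}. fst g x = P * sin (sqrt lam * x)"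
    "\<forall>j<s. \<forall>x\<in>{0..eps}. snd g j x = P * (sin (sqrt lam) / sin (sqrt lam * eps)) * sin (sqrt lam * x)"
proof -
  define k where "k = sqrt lam"
  have lam: "0 < lam" by (rule eigenvalue_pos[OF ef eps])
  hence k: "0 < k" "k * k = lam" unfolding k_def by auto
  have S: "\<And>x. ((\<lambda>x. sin (k * x) / k) has_real_derivative cos (k * x)) (at x)"
    and C: "\<And>x. ((\<lambda>x. cos (k * x)) has_real_derivative - lam * (sin (k * x) / k)) (at x)"
    using sin_oscillator[of k lam] k by auto
  have S0: "sin (k * 0) / k = 0" and C0: "cos (k * 0) = 1" by simp_all
  obtain P Q where long: "\<forall>x\<in>{0..1}. fst g x = P * (sin (k * x) / k)"
    and small: "\<forall>j<s. \<forall>x\<in>{0..eps}. snd g j x = Q j * (sin (k * x) / k)"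
    and continuity: "\<forall>j<s. Q j * (sin (k * eps) / k) = P * (sin (k * 1) / k)"
    and kirchhoff: "P * cos (k * 1) + (\<Sum>j<s. Q j * cos (k * eps)) = 0"
    and nonzero: "P \<noteq> 0 \<or> (\<exists>j<s. Q j \<noteq> 0)"
    by (rule eigenfunction_fundamental_form[OF ef eps S C S0 C0])
  have Q: "Q j = P * (sin k / sin (k * eps))" if "j < s" for j
    using continuity that sin_eps k unfolding k_def by (simp add: field_simps)
  have P: "P \<noteq> 0" using nonzero Q by auto
  have "sin k \<noteq> 0"
  proof
    assume "sin k = 0"
    moreover from this have "cos k \<noteq> 0" using sin_cos_squared_add[of k] by auto
    ultimately show False using kirchhoff Q P by simp
  qed
  show thesis
  proof (rule that[of "P / k", folded k_def])
    show "\<forall>x\<in>{0..1}. fst g x = P / k * sin (k * x)" using long by simp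
    show "\<forall>j<s. \<forall>x\<in>{0..eps}. snd g j x = P / k * (sin k / sin (k * eps)) * sin (k * x)"
      using small Q by simp
  qed (use P k \<open>sin k \<noteq> 0\<close> in auto)
qed

lemma eigenfunction_small_edge_form:
  assumes "is_eigenfunction s eps lam g" "0 < eps" "sin (sqrt lam * eps) \<noteq> 0"
  obtains Q where "Q \<noteq> 0" "\<forall>j<s. \<forall>x\<in>{0..eps}. snd g j x = Q * sin (sqrt lam * x)"
proof -
  obtain P where "P \<noteq> 0" "sin (sqrt lam) \<noteq> 0" "\<forall>x\<in>{0..1}. fst g x = P * sin (sqrt lam * x)"
    "\<forall>j<s. \<forall>x\<in>{0..eps}. snd g j x = P * (sin (sqrt lam) / sin (sqrt lam * eps)) * sin (sqrt lam * x)"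
    by (rule eigenfunction_sin_form[OF assms])
  thus thesis using that[of "P * (sin (sqrt lam) / sin (sqrt lam * eps))"] assms(3) by simp
qed

lemma sign_change_root:
  fixes F :: "real \<Rightarrow> real"
  assumes "a \<le> b" "continuous_on {a..b} F" "F a * F b < 0"
  obtains x where "a < x" "x < b" "F x = 0"
proof -
  have "\<exists>x. a \<le> x \<and> x \<le> b \<and> F x = 0"
  proof (cases "F a \<le> 0")
    case True
    hence "0 \<le> F b" using assms(3) mult_nonpos_nonpos[of "F a" "F b"] by linarith
    thus ?thesis using IVT'[of F a 0 b] True assms(1,2) by auto
  next
    case False
    hence "F b \<le> 0" using assms(3) mult_pos_pos[of "F a" "F b"] by linarith
    thus ?thesis using IVT2'[of F b 0 a] False assms(1,2) by auto
  qed
  then obtain x where x: "a \<le> x" "x \<le> b" "F x = 0" by blast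
  moreover have "x \<noteq> a" "x \<noteq> b" using x assms(3) by auto
  ultimately have "a < x" "x < b" by auto
  thus thesis using that x(3) by blast
qed

lemma secular_equation_root:
  fixes s n :: nat
  assumes eps: "0 < eps" and s: "0 < s" and n: "1 \<le> n" and n_eps: "real n * pi * eps < pi / 2"
  obtains r where "real n * pi - pi / 2 < r" "r < real n * pi"
    "cos r * sin (r * eps) + real s * sin r * cos (r * eps) = 0"
proof -
  define F where "F r = cos r * sin (r * eps) + real s * sin r * cos (r * eps)" for r
  define a where "a = real n * pi - pi / 2"
  define b where "b = real n * pi"
  have "1 * pi \<le> b" unfolding b_def using n by (intro mult_right_mono) auto
  hence "0 < a * eps" "a * eps < b * eps" "b * eps < pi / 2"
    using eps n_eps unfolding a_def b_def by auto
  hence "0 < cos (a * eps)" "0 < sin (b * eps)"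
    by (auto intro!: cos_gt_zero sin_gt_zero)
  moreover have "cos a = 0" "sin a = - cos (real n * pi)" "sin b = 0" "cos b = cos (real n * pi)"
    unfolding a_def b_def by (simp_all add: cos_diff sin_diff)
  hence "F a * F b = - real s * cos (a * eps) * sin (b * eps) * (cos (real n * pi))\<^sup>2"
    unfolding F_def by (simp add: power2_eq_square algebra_simps)
  moreover have "(cos (real n * pi))\<^sup>2 = 1" using sin_cos_squared_add[of "real n * pi"] by simp
  ultimately have "F a * F b < 0" using s by simp
  moreover have "continuous_on {a..b} F" unfolding F_def by (intro continuous_intros)
  ultimately obtain r where "a < r" "r < b" "F r = 0"
    using sign_change_root[of a b F] unfolding a_def b_def by auto
  thus thesis using that unfolding a_def b_def F_def by blast
qed

lemma secular_root_eigenfunction: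
  assumes r: "pi / 2 < r" and sin_eps: "sin (r * eps) \<noteq> 0"
    and secular: "cos r * sin (r * eps) + real s * sin r * cos (r * eps) = 0"
  shows "is_eigenfunction s eps (r\<^sup>2) (\<lambda>x. sin (r * x), \<lambda>j x. sin r / sin (r * eps) * sin (r * x))"
proof -
  define R where "R = sin r / sin (r * eps)"
  have "r * cos r + (\<Sum>j<s. R * (r * cos (r * eps)))
      = r * (cos r * sin (r * eps) + real s * sin r * cos (r * eps)) / sin (r * eps)"
    using sin_eps unfolding R_def by (simp add: field_simps)
  hence kirchhoff: "r * cos r + (\<Sum>j<s. R * (r * cos (r * eps))) = 0" using secular by simp
  have r0: "0 < r" using r pi_gt_zero by linarith
  have "sin (r * (pi / (2 * r))) = 1" using r0 by simp
  moreover have "pi / (2 * r) \<in> {0..1}" using r r0 by (simp add: field_simps)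
  ultimately have nonzero: "\<not> graph_zero s eps (\<lambda>x. sin (r * x), \<lambda>j x. R * sin (r * x))"
    unfolding graph_zero_def by fastforce
  show ?thesis
    unfolding is_eigenfunction_def R_def[symmetric]
  proof (intro conjI exI[of _ "\<lambda>x. r * cos (r * x)"] exI[of _ "\<lambda>j x. R * (r * cos (r * x))"] ballI allI impI)
    show "((\<lambda>x. R * (r * cos (r * x))) has_real_derivative - r\<^sup>2 * snd (\<lambda>x. sin (r * x), \<lambda>j x. R * sin (r * x)) j x)
        (at x within {0..eps})" for j :: nat and x
      by (auto intro!: derivative_eq_intros simp: power2_eq_square)
    show "((\<lambda>x. r * cos (r * x)) has_real_derivative - r\<^sup>2 * fst (\<lambda>x. sin (r * x), \<lambda>j x. R * sin (r * x)) x)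
        (at x within {0..1})" for x
      by (auto intro!: derivative_eq_intros simp: power2_eq_square)
  qed (use kirchhoff nonzero sin_eps in \<open>auto intro!: derivative_eq_intros simp: R_def\<close>)
qed

lemma secular_eigenvalue:
  fixes s n :: nat
  assumes eps: "0 < eps" and s: "0 < s" and n: "1 \<le> n" and n_eps: "real n * pi * eps < pi / 2"
  obtains r where "real n * pi - pi / 2 < r" "r < real n * pi"
    "is_eigenfunction s eps (r\<^sup>2) (\<lambda>x. sin (r * x), \<lambda>j x. sin r / sin (r * eps) * sin (r * x))"
proof -
  obtain r where r: "real n * pi - pi / 2 < r" "r < real n * pi"
      and secular: "cos r * sin (r * eps) + real s * sin r * cos (r * eps) = 0"
    by (rule secular_equation_root[OF eps s n n_eps])
  have "1 * pi \<le> real n * pi" using n by (intro mult_right_mono) auto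
  hence r_gt: "pi / 2 < r" using r by linarith
  hence "0 < r" using pi_gt_zero by linarith
  hence "0 < r * eps" using eps by simp
  have "r * eps < real n * pi * eps" using r eps by simp
  also have "\<dots> < pi" using n_eps pi_gt_zero by linarith
  finally have "sin (r * eps) \<noteq> 0" using sin_gt_zero \<open>0 < r * eps\<close> by fastforce
  thus thesis using that r secular_root_eigenfunction[OF r_gt _ secular] by blast
qed

lemma integral_sin_squared_pos:
  fixes k :: real
  assumes "0 < k"
  shows "0 < integral {0..1} (\<lambda>x. (sin (k * x))\<^sup>2)"
proof -
  have int: "(\<lambda>x. (sin (k * x))\<^sup>2) integrable_on {0..1}"
    by (intro integrable_continuous_interval continuous_intros)
  have "integral {0..1} (\<lambda>x. (sin (k * x))\<^sup>2) \<noteq> 0"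
  proof
    assume "integral {0..1} (\<lambda>x. (sin (k * x))\<^sup>2) = 0"
    hence zero: "((\<lambda>x. (sin (k * x))\<^sup>2) has_integral 0) (cbox 0 1)"
      using int by (simp add: has_integral_integral)
    define x0 where "x0 = min 1 (1 / k)"
    have x0: "0 < x0" "x0 \<le> 1" "k * x0 \<le> 1"
      using assms unfolding x0_def by (auto simp: min_def field_simps)
    have "continuous_on (cbox 0 1) (\<lambda>x. (sin (k * x))\<^sup>2)" by (intro continuous_intros)
    hence "(sin (k * x0))\<^sup>2 = 0"
      by (rule has_integral_0_cbox_imp_0[OF _ _ zero, of x0]) (use x0 in auto)
    moreover have "0 < sin (k * x0)" using x0 assms pi_gt3 by (intro sin_gt_zero) auto
    ultimately show False by simp
  qed
  moreover have "0 \<le> integral {0..1} (\<lambda>x. (sin (k * x))\<^sup>2)" by (intro integral_nonneg int) auto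
  ultimately show ?thesis by simp
qed

lemma graph_inner_sin_forms_neq_0:
  assumes k: "0 < k" and P: "P \<noteq> 0" and P': "P' \<noteq> 0"
    and g1: "\<forall>x\<in>{0..1}. fst g x = P * sin (k * x)" and g2: "\<forall>j<s. \<forall>x\<in>{0..eps}. snd g j x = P * R * sin (k * x)"
    and h1: "\<forall>x\<in>{0..1}. fst h x = P' * sin (k * x)" and h2: "\<forall>j<s. \<forall>x\<in>{0..eps}. snd h j x = P' * R * sin (k * x)"
  shows "graph_inner s eps g h \<noteq> 0"
proof -
  define I1 where "I1 = integral {0..1} (\<lambda>x. (sin (k * x))\<^sup>2)"
  define I2 where "I2 = integral {0..eps} (\<lambda>x. (sin (k * x))\<^sup>2)"
  have "integral {0..1} (\<lambda>x. fst g x * fst h x) = integral {0..1} (\<lambda>x. (sin (k * x))\<^sup>2 * (P * P'))"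
    using g1 h1 by (intro integral_cong) (simp add: power2_eq_square)
  hence e1: "integral {0..1} (\<lambda>x. fst g x * fst h x) = I1 * (P * P')" unfolding I1_def by simp
  have e2: "integral {0..eps} (\<lambda>x. snd g j x * snd h j x) = I2 * (P * P' * R\<^sup>2)" if "j < s" for j
  proof -
    have "integral {0..eps} (\<lambda>x. snd g j x * snd h j x) = integral {0..eps} (\<lambda>x. (sin (k * x))\<^sup>2 * (P * P' * R\<^sup>2))"
      using g2 h2 that by (intro integral_cong) (simp add: power2_eq_square)
    thus ?thesis unfolding I2_def by simp
  qed
  have "graph_inner s eps g h = P * P' * (I1 + real s * R\<^sup>2 * I2)"
    unfolding graph_inner_def using e1 e2 by (simp add: algebra_simps)
  moreover have "I2 \<ge> 0" unfolding I2_def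
    by (intro integral_nonneg integrable_continuous_interval continuous_intros) auto
  moreover have "I1 > 0" unfolding I1_def by (rule integral_sin_squared_pos[OF k])
  ultimately have "I1 + real s * R\<^sup>2 * I2 > 0" by (simp add: add_pos_nonneg)
  thus ?thesis using P P' \<open>graph_inner s eps g h = P * P' * (I1 + real s * R\<^sup>2 * I2)\<close> by simp
qed

lemma rolle_zero_count:
  fixes f f' :: "real \<Rightarrow> real"
  assumes "finite Z" "Z \<subseteq> {a..b}" "\<forall>x\<in>Z. f x = 0" "continuous_on {a..b} f"
    "\<And>x. a < x \<Longrightarrow> x < b \<Longrightarrow> (f has_real_derivative f' x) (at x)"
  obtains Z' where "finite Z'" "Z' \<subseteq> {a<..<b}" "card Z \<le> card Z' + 1" "\<forall>x\<in>Z'. f' x = 0"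
proof -
  have "\<exists>Z'. finite Z' \<and> Z' \<subseteq> {a<..<b} \<and> card Z \<le> card Z' + 1 \<and> (\<forall>x\<in>Z'. f' x = 0)"
    using assms
  proof (induction Z arbitrary: b rule: finite_linorder_max_induct)
    case empty
    show ?case by (intro exI[of _ "{}"]) simp
  next
    case (insert m A)
    show ?case
    proof (cases "A = {}")
      case True
      thus ?thesis by (intro exI[of _ "{}"]) simp
    next
      case False
      define m0 where "m0 = Max A"
      have m0: "m0 \<in> A" "m0 < m" using False insert.hyps m0_def by auto
      have bounds: "a \<le> m0" "m \<le> b" using insert.prems(1) m0 by auto
      obtain Z' where Z': "finite Z'" "Z' \<subseteq> {a<..<m0}" "card A \<le> card Z' + 1" "\<forall>x\<in>Z'. f' x = 0"
      proof -
        have "A \<subseteq> {a..m0}" using insert.prems(1) insert.hyps(1) m0_def by auto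
        moreover have "continuous_on {a..m0} f"
          using insert.prems(3) by (rule continuous_on_subset) (use bounds m0 in auto)
        ultimately show thesis
          using insert.IH[of m0] insert.prems(2,4) bounds m0 that by auto
      qed
      obtain z where z: "m0 < z" "z < m" "(\<lambda>v. f' z * v) = (\<lambda>v. 0)"
      proof (rule exE[OF Rolle_deriv[of m0 m f "\<lambda>x v. f' x * v"]])
        show "f m0 = f m" using insert.prems(2) m0 by auto
        show "continuous_on {m0..m} f"
          using insert.prems(3) by (rule continuous_on_subset) (use bounds m0 in auto)
        show "(f has_derivative (\<lambda>v. f' x * v)) (at x)" if "m0 < x" "x < m" for x
          using insert.prems(4)[of x] that bounds m0 by (simp add: has_field_derivative_def mult_commute_abs)
      qed (use m0 in auto)
      have "f' z = 0" using fun_cong[OF z(3), of 1] by simp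
      moreover have "z \<notin> Z'" using Z'(2) z by auto
      ultimately show ?thesis
        using Z' z bounds m0 insert.hyps by (intro exI[of _ "insert z Z'"]) auto
    qed
  qed
  thus thesis using that by blast
qed

lemma quotient_zero_count:
  fixes \<psi> \<psi>' w w' :: "real \<Rightarrow> real"
  assumes \<psi>: "\<And>x. (\<psi> has_real_derivative \<psi>' x) (at x)" and w: "\<And>x. (w has_real_derivative w' x) (at x)"
    and w_pos: "\<And>x. 0 < x \<Longrightarrow> x < a \<Longrightarrow> 0 < w x"
    and Z: "finite Z" "Z \<subseteq> {0<..<a}" "\<forall>x\<in>Z. \<psi> x = 0"
  obtains Z' where "finite Z'" "Z' \<subseteq> {0<..<a}" "card Z \<le> card Z' + 1"
    "\<forall>x\<in>Z'. \<psi>' x * w x - \<psi> x * w' x = 0"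
proof (cases "Z = {}")
  case True
  thus thesis using that[of "{}"] by simp
next
  case False
  define \<alpha> where "\<alpha> = Min Z"
  define \<beta> where "\<beta> = Max Z"
  have \<alpha>\<beta>: "0 < \<alpha>" "\<beta> < a" "Z \<subseteq> {\<alpha>..\<beta>}"
    using False Z(1,2) unfolding \<alpha>_def \<beta>_def by (auto simp: subset_iff)
  have w_nonzero: "w x \<noteq> 0" if "\<alpha> \<le> x" "x \<le> \<beta>" for x using w_pos[of x] that \<alpha>\<beta> by auto
  have quotient_deriv: "((\<lambda>x. \<psi> x / w x) has_real_derivative (\<psi>' x * w x - \<psi> x * w' x) / (w x)\<^sup>2) (at x)"
    if "\<alpha> \<le> x" "x \<le> \<beta>" for x
    using w_nonzero[OF that] \<psi> w by (auto intro!: derivative_eq_intros simp: power2_eq_square)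
  obtain Z' where Z': "finite Z'" "Z' \<subseteq> {\<alpha><..<\<beta>}" "card Z \<le> card Z' + 1"
      "\<forall>x\<in>Z'. (\<psi>' x * w x - \<psi> x * w' x) / (w x)\<^sup>2 = 0"
  proof (rule rolle_zero_count[OF Z(1) \<alpha>\<beta>(3), where f = "\<lambda>x. \<psi> x / w x"
        and f' = "\<lambda>x. (\<psi>' x * w x - \<psi> x * w' x) / (w x)\<^sup>2"])
    show "\<forall>x\<in>Z. \<psi> x / w x = 0" using Z(3) by simp
    show "continuous_on {\<alpha>..\<beta>} (\<lambda>x. \<psi> x / w x)"
      using quotient_deriv by (intro continuous_at_imp_continuous_on ballI DERIV_isCont) auto
  qed (use quotient_deriv that in auto)
  moreover have "Z' \<subseteq> {0<..<a}" using Z'(2) \<alpha>\<beta> by auto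
  moreover have "\<psi>' x * w x - \<psi> x * w' x = 0" if "x \<in> Z'" for x
    using Z'(2,4) w_nonzero[of x] that by fastforce
  ultimately show thesis using that by blast
qed

text \<open>The Wronskian \<open>\<psi>' w - \<psi> w'\<close> also vanishes at \<open>0\<close>, and its derivative is \<open>\<psi>'' w - \<psi> w''\<close>.\<close>
lemma wronskian_zero_count:
  fixes \<psi> \<psi>' \<psi>'' w w' w'' :: "real \<Rightarrow> real"
  assumes \<psi>: "\<And>x. (\<psi> has_real_derivative \<psi>' x) (at x)" "\<And>x. (\<psi>' has_real_derivative \<psi>'' x) (at x)"
    and w: "\<And>x. (w has_real_derivative w' x) (at x)" "\<And>x. (w' has_real_derivative w'' x) (at x)"
    and "\<psi> 0 = 0" "w 0 = 0" and w_pos: "\<And>x. 0 < x \<Longrightarrow> x < a \<Longrightarrow> 0 < w x"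
    and Z: "finite Z" "Z \<subseteq> {0<..<a}" "\<forall>x\<in>Z. \<psi> x = 0"
  obtains Z' where "finite Z'" "Z' \<subseteq> {0<..<a}" "card Z \<le> card Z' + 1"
    "\<forall>x\<in>Z'. \<psi>'' x * w x - \<psi> x * w'' x = 0"
proof (cases "Z = {}")
  case True
  thus thesis using that[of "{}"] by simp
next
  case False
  hence "0 < a" using Z(2) by auto
  define W where "W x = \<psi>' x * w x - \<psi> x * w' x" for x
  obtain Z1 where Z1: "finite Z1" "Z1 \<subseteq> {0<..<a}" "card Z \<le> card Z1 + 1" "\<forall>x\<in>Z1. W x = 0"
    unfolding W_def by (rule quotient_zero_count[OF \<psi>(1) w(1) w_pos Z])
  have W_deriv: "(W has_real_derivative \<psi>'' x * w x - \<psi> x * w'' x) (at x)" for x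
    unfolding W_def using \<psi> w by (auto intro!: derivative_eq_intros simp: algebra_simps)
  obtain Z' where Z': "finite Z'" "Z' \<subseteq> {0<..<a}" "card (insert 0 Z1) \<le> card Z' + 1"
      "\<forall>x\<in>Z'. \<psi>'' x * w x - \<psi> x * w'' x = 0"
  proof (rule rolle_zero_count[of "insert 0 Z1" 0 a W])
    show "\<forall>x\<in>insert 0 Z1. W x = 0" using Z1(4) \<open>\<psi> 0 = 0\<close> \<open>w 0 = 0\<close> unfolding W_def by simp
    show "continuous_on {0..a} W"
      using W_deriv by (intro continuous_at_imp_continuous_on ballI DERIV_isCont)
  qed (use Z1 W_deriv \<open>0 < a\<close> in auto)
  moreover have "0 \<notin> Z1" using Z1(2) by auto
  ultimately show thesis using that Z1(1,3) by simp
qed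

lemma sin_pos_below:
  assumes "0 < \<kappa>" "\<kappa> * a < pi" "0 < x" "x < a"
  shows "0 < sin (\<kappa> * x)"
proof (rule sin_gt_zero)
  show "0 < \<kappa> * x" using assms by simp
  have "\<kappa> * x < \<kappa> * a" using assms by simp
  thus "\<kappa> * x < pi" using assms by linarith
qed

text \<open>Comparing a sum of sines with \<open>sin (\<kappa> x)\<close> kills the term of frequency \<open>\<kappa>\<close>.\<close>
lemma sine_sum_zero_count_step:
  fixes k d :: "nat \<Rightarrow> real"
  assumes \<kappa>: "0 < \<kappa>" "\<kappa> * a < pi"
    and Z: "finite Z" "Z \<subseteq> {0<..<a}" "\<forall>x\<in>Z. (\<Sum>i<n. d i * sin (k i * x)) = 0"
  obtains Z' where "finite Z'" "Z' \<subseteq> {0<..<a}" "card Z \<le> card Z' + 1"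
    "\<forall>x\<in>Z'. (\<Sum>i<n. d i * (\<kappa>\<^sup>2 - (k i)\<^sup>2) * sin (k i * x)) = 0"
proof -
  define \<psi> where "\<psi> x = (\<Sum>i<n. d i * sin (k i * x))" for x
  define \<psi>' where "\<psi>' x = (\<Sum>i<n. d i * (cos (k i * x) * k i))" for x
  define \<psi>'' where "\<psi>'' x = (\<Sum>i<n. d i * (- sin (k i * x) * k i * k i))" for x
  have wronskian: "\<psi>'' x * sin (\<kappa> * x) - \<psi> x * (- sin (\<kappa> * x) * \<kappa> * \<kappa>)
      = sin (\<kappa> * x) * (\<Sum>i<n. d i * (\<kappa>\<^sup>2 - (k i)\<^sup>2) * sin (k i * x))" for x
    unfolding \<psi>''_def \<psi>_def sum_distrib_right sum_distrib_left sum_subtractf[symmetric]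
    by (intro sum.cong refl) (simp add: power2_eq_square algebra_simps)
  obtain Z' where Z': "finite Z'" "Z' \<subseteq> {0<..<a}" "card Z \<le> card Z' + 1"
      "\<forall>x\<in>Z'. \<psi>'' x * sin (\<kappa> * x) - \<psi> x * (- sin (\<kappa> * x) * \<kappa> * \<kappa>) = 0"
  proof (rule wronskian_zero_count[of \<psi> \<psi>' \<psi>'' "\<lambda>x. sin (\<kappa> * x)" "\<lambda>x. cos (\<kappa> * x) * \<kappa>"
        "\<lambda>x. - sin (\<kappa> * x) * \<kappa> * \<kappa>" a Z])
    show "(\<psi> has_real_derivative \<psi>' x) (at x)" for x
      unfolding \<psi>_def \<psi>'_def by (intro DERIV_sum DERIV_cmult) (auto intro!: derivative_eq_intros)
    show "(\<psi>' has_real_derivative \<psi>'' x) (at x)" for x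
      unfolding \<psi>'_def \<psi>''_def by (intro DERIV_sum DERIV_cmult) (auto intro!: derivative_eq_intros)
    show "((\<lambda>x. sin (\<kappa> * x)) has_real_derivative cos (\<kappa> * x) * \<kappa>) (at x)"
      "((\<lambda>x. cos (\<kappa> * x) * \<kappa>) has_real_derivative - sin (\<kappa> * x) * \<kappa> * \<kappa>) (at x)" for x
      by (auto intro!: derivative_eq_intros)
    show "\<psi> 0 = 0" unfolding \<psi>_def by simp
    show "\<forall>x\<in>Z. \<psi> x = 0" using Z(3) unfolding \<psi>_def .
    show "0 < sin (\<kappa> * x)" if "0 < x" "x < a" for x using sin_pos_below[OF \<kappa> that] .
  qed (use Z(1,2) that in auto)
  have "(\<Sum>i<n. d i * (\<kappa>\<^sup>2 - (k i)\<^sup>2) * sin (k i * x)) = 0" if "x \<in> Z'" for x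
  proof -
    have "0 < sin (\<kappa> * x)" using Z'(2) that sin_pos_below[OF \<kappa>] by auto
    thus ?thesis using Z'(4) that wronskian[of x] by simp
  qed
  thus thesis using that Z'(1-3) by blast
qed

lemma sine_sum_zeros_card_less:
  fixes k d :: "nat \<Rightarrow> real"
  assumes "\<forall>i<n. 0 < k i \<and> k i * a < pi" "inj_on k {..<n}" "\<exists>i<n. d i \<noteq> 0"
    "finite Z" "Z \<subseteq> {0<..<a}" "\<forall>x\<in>Z. (\<Sum>i<n. d i * sin (k i * x)) = 0"
  shows "card Z < n"
  using assms
proof (induction n arbitrary: d Z)
  case 0
  thus ?case by simp
next
  case (Suc n)
  define \<kappa> where "\<kappa> = k n"
  have \<kappa>: "0 < \<kappa>" "\<kappa> * a < pi" using Suc.prems(1) unfolding \<kappa>_def by simp_all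
  show ?case
  proof (cases "\<forall>i<n. d i = 0")
    case True
    hence "d n \<noteq> 0" and sum: "(\<Sum>i<Suc n. d i * sin (k i * x)) = d n * sin (\<kappa> * x)" for x
      using Suc.prems(3) less_Suc_eq unfolding \<kappa>_def by auto
    have "Z = {}"
    proof (rule ccontr)
      assume "Z \<noteq> {}"
      then obtain z where "z \<in> Z" by blast
      thus False using Suc.prems(5,6) sum[of z] sin_pos_below[OF \<kappa>, of z] \<open>d n \<noteq> 0\<close> by auto
    qed
    thus ?thesis by simp
  next
    case False
    then obtain i0 where i0: "i0 < n" "d i0 \<noteq> 0" by auto
    define d' where "d' i = d i * (\<kappa>\<^sup>2 - (k i)\<^sup>2)" for i
    obtain Z' where Z': "finite Z'" "Z' \<subseteq> {0<..<a}" "card Z \<le> card Z' + 1"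
        "\<forall>x\<in>Z'. (\<Sum>i<Suc n. d' i * sin (k i * x)) = 0"
      using sine_sum_zero_count_step[OF \<kappa> Suc.prems(4-6)] unfolding d'_def by blast
    have "card Z' < n"
    proof (rule Suc.IH)
      have "k i0 \<noteq> \<kappa>" using Suc.prems(2) i0(1) unfolding \<kappa>_def by (auto dest: inj_onD)
      hence "\<kappa>\<^sup>2 \<noteq> (k i0)\<^sup>2" using Suc.prems(1) i0(1) \<kappa>(1)
        by (metis less_Suc_eq less_eq_real_def power2_eq_iff_nonneg)
      thus "\<exists>i<n. d' i \<noteq> 0" using i0 unfolding d'_def by auto
      show "\<forall>x\<in>Z'. (\<Sum>i<n. d' i * sin (k i * x)) = 0"
        using Z'(4) unfolding d'_def \<kappa>_def by simp
    qed (use Suc.prems Z' in \<open>auto intro: inj_on_subset\<close>)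
    thus ?thesis using Z'(3) by simp
  qed
qed

lemma homogeneous_system_nontrivial_solution:
  fixes a :: "'j \<Rightarrow> 'i \<Rightarrow> real"
  assumes "finite J" "finite I" "card J < card I"
  shows "\<exists>d. (\<exists>i\<in>I. d i \<noteq> 0) \<and> (\<forall>j\<in>J. (\<Sum>i\<in>I. d i * a j i) = 0)"
  using assms
proof (induction J arbitrary: I a rule: finite_induct)
  case empty
  hence "I \<noteq> {}" by auto
  thus ?case by (intro exI[of _ "\<lambda>_. 1"]) auto
next
  case (insert j0 J)
  show ?case
  proof (cases "\<forall>i\<in>I. a j0 i = 0")
    case True
    have "card J < card I" using insert by simp
    then obtain d where d: "\<exists>i\<in>I. d i \<noteq> 0" "\<forall>j\<in>J. (\<Sum>i\<in>I. d i * a j i) = 0"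
      using insert.IH[OF insert.prems(1)] by blast
    thus ?thesis using True by (intro exI[of _ d]) auto
  next
    case False
    then obtain p where p: "p \<in> I" "a j0 p \<noteq> 0" by auto
    define b where "b j i = a j i * a j0 p - a j p * a j0 i" for j i
    have "card J < card (I - {p})" using insert p by simp
    then obtain D where D: "\<exists>i\<in>I - {p}. D i \<noteq> 0" "\<forall>j\<in>J. (\<Sum>i\<in>I - {p}. D i * b j i) = 0"
      using insert.IH[of "I - {p}" b] insert.prems(1) by blast
    define x where "x = - (\<Sum>i\<in>I - {p}. D i * a j0 i)"
    define d where "d i = (if i = p then x else a j0 p * D i)" for i
    have sumd: "(\<Sum>i\<in>I. d i * a j i) = x * a j p + a j0 p * (\<Sum>i\<in>I - {p}. D i * a j i)" for j
      unfolding sum.remove[OF insert.prems(1) p(1)] d_def by (auto simp: sum_distrib_left intro!: sum.cong)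
    show ?thesis
    proof (intro exI[of _ d] conjI ballI)
      obtain i1 where i1: "i1 \<in> I - {p}" "D i1 \<noteq> 0" using D(1) by blast
      hence "d i1 \<noteq> 0" using p unfolding d_def by auto
      thus "\<exists>i\<in>I. d i \<noteq> 0" using i1 by blast
      fix j assume "j \<in> insert j0 J"
      then consider "j = j0" | "j \<in> J" by auto
      thus "(\<Sum>i\<in>I. d i * a j i) = 0"
      proof cases
        case 1 thus ?thesis using sumd[of j0] unfolding x_def by (simp add: algebra_simps)
      next
        case 2
        have "(\<Sum>i\<in>I - {p}. D i * b j i) = a j0 p * (\<Sum>i\<in>I - {p}. D i * a j i) - a j p * (\<Sum>i\<in>I - {p}. D i * a j0 i)"
          unfolding b_def by (simp add: sum_distrib_left sum_subtractf algebra_simps)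
        thus ?thesis using sumd[of j] D(2) 2 unfolding x_def by (simp add: algebra_simps)
      qed
    qed
  qed
qed

text \<open>Interpolating \<open>L - 1\<close> prescribed zeros in \<open>(0, eps)\<close>; as the sum has fewer than \<open>L\<close>
  zeros in \<open>(0, 2 eps)\<close>, it has no further zero in \<open>(0, eps]\<close>.\<close>
lemma sine_sum_prescribed_zero_count:
  fixes k :: "nat \<Rightarrow> real"
  assumes eps: "0 < eps" and L: "1 \<le> L" and k: "\<forall>i<L. 0 < k i \<and> k i * eps < pi / 2"
    and inj: "inj_on k {..<L}"
  obtains d where "finite {x. 0 < x \<and> x < eps \<and> (\<Sum>i<L. d i * sin (k i * x)) = 0}"
    "card {x. 0 < x \<and> x < eps \<and> (\<Sum>i<L. d i * sin (k i * x)) = 0} = L - 1"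
    "(\<Sum>i<L. d i * sin (k i * eps)) \<noteq> 0"
proof -
  define T where "T = (\<lambda>j. eps * (real j + 1) / real L) ` {..<L - 1}"
  have "inj_on (\<lambda>j. eps * (real j + 1) / real L) {..<L - 1}"
    using eps L by (auto simp: inj_on_def field_simps)
  hence T: "finite T" "card T = L - 1" unfolding T_def by (simp_all add: card_image)
  have "eps * (real j + 1) / real L < eps" if "j < L - 1" for j
  proof -
    have "real j + 1 < real L" using that by linarith
    hence "eps * (real j + 1) < eps * real L" using eps by simp
    thus ?thesis using L by (simp add: pos_divide_less_eq)
  qed
  hence T_sub: "T \<subseteq> {0<..<eps}" unfolding T_def using eps by auto
  have "card T < card {..<L}" using T L by simp
  then obtain d where d: "\<exists>i\<in>{..<L}. d i \<noteq> 0" "\<forall>t\<in>T. (\<Sum>i<L. d i * sin (k i * t)) = 0"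
    using homogeneous_system_nontrivial_solution[of T "{..<L}" "\<lambda>t i. sin (k i * t)"] T(1) by blast
  define \<psi> where "\<psi> x = (\<Sum>i<L. d i * sin (k i * x))" for x
  have no_other_zero: "x \<in> T" if "0 < x" "x \<le> eps" "\<psi> x = 0" for x
  proof (rule ccontr)
    assume "x \<notin> T"
    have "card (insert x T) < L"
    proof (rule sine_sum_zeros_card_less[where a = "2 * eps" and d = d])
      show "\<forall>i<L. 0 < k i \<and> k i * (2 * eps) < pi" using k by auto
      show "insert x T \<subseteq> {0<..<2 * eps}" using T_sub that eps by auto
      show "\<forall>x\<in>insert x T. (\<Sum>i<L. d i * sin (k i * x)) = 0" using d(2) that unfolding \<psi>_def by blast
    qed (use inj d(1) T(1) in auto)
    thus False using \<open>x \<notin> T\<close> T by simp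
  qed
  have "{x. 0 < x \<and> x < eps \<and> \<psi> x = 0} = T"
  proof
    show "{x. 0 < x \<and> x < eps \<and> \<psi> x = 0} \<subseteq> T" using no_other_zero by auto
    show "T \<subseteq> {x. 0 < x \<and> x < eps \<and> \<psi> x = 0}" using T_sub d(2) unfolding \<psi>_def by auto
  qed
  moreover have "\<psi> eps \<noteq> 0" using no_other_zero[of eps] T_sub eps by auto
  ultimately show thesis using that[of d] T unfolding \<psi>_def by simp
qed

lemma eigen_sequenceD:
  assumes "eigen_sequence s eps lam f"
  shows "mono lam" "is_eigenfunction s eps (lam k) (f k)"
    "k \<noteq> k' \<Longrightarrow> graph_inner s eps (f k) (f k') = 0"
  using assms unfolding eigen_sequence_def by auto

lemma eigen_sequence_eigenvalue:
  assumes "eigen_sequence s eps lam f" "is_eigenfunction s eps \<mu> g"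
  shows "\<mu> \<in> range lam"
proof -
  have "\<forall>\<mu> g. is_eigenfunction s eps \<mu> g \<longrightarrow>
      (\<exists>K c. finite K \<and> K \<subseteq> {k. lam k = \<mu>} \<and> graph_eq s eps g (gsum c f K))"
    using assms(1) unfolding eigen_sequence_def by (elim conjE)
  then obtain K c where K: "K \<subseteq> {k. lam k = \<mu>}" "graph_eq s eps g (gsum c f K)"
    using assms(2) by blast
  have "K \<noteq> {}"
  proof
    assume "K = {}"
    hence "graph_zero s eps g" using K(2) unfolding graph_eq_def graph_zero_def gsum_def by simp
    thus False using assms(2) by (simp add: is_eigenfunction_def)
  qed
  thus ?thesis using K(1) by blast
qed

lemma mono_less_if_many_values_below:
  fixes lam :: "nat \<Rightarrow> 'a::linorder"
  assumes mono: "mono lam" and A: "finite A" "A \<subseteq> range lam" "M \<le> card A" "\<forall>a\<in>A. a < B"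
    and M: "0 < M"
  shows "lam (M - 1) < B"
proof (rule ccontr)
  assume "\<not> lam (M - 1) < B"
  have "A \<subseteq> lam ` {..<M - 1}"
  proof
    fix a assume "a \<in> A"
    then obtain i where i: "a = lam i" using A(2) by blast
    have "lam i < lam (M - 1)" using \<open>a \<in> A\<close> i A(4) \<open>\<not> lam (M - 1) < B\<close> by force
    hence "i < M - 1" using monoD[OF mono, of "M - 1" i] by (meson leI leD)
    thus "a \<in> lam ` {..<M - 1}" using i by simp
  qed
  hence "card A \<le> card (lam ` {..<M - 1})" by (intro card_mono) simp_all
  also have "\<dots> \<le> M - 1" using card_image_le[of "{..<M - 1}" lam] by simp
  finally show False using A(3) M by simp
qed

lemma eigen_sequence_low_eigenvalues:
  assumes es: "eigen_sequence s eps lam f" and eps: "0 < eps" and s: "0 < s" and M: "0 < M"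
    and M_eps: "real M * eps < 1 / 2"
  shows "lam (M - 1) < (real M * pi)\<^sup>2"
proof -
  have n_eps: "real n * pi * eps < pi / 2" if "n \<le> M" for n
  proof -
    have "real n * eps \<le> real M * eps" using that eps by (simp add: mult_right_mono)
    thus ?thesis using M_eps pi_gt_zero mult_strict_left_mono[of "real n * eps" "1/2" pi] by simp
  qed
  have "\<exists>r. real n * pi - pi / 2 < r \<and> r < real n * pi \<and> r\<^sup>2 \<in> range lam" if "n \<in> {1..M}" for n
  proof -
    have n: "1 \<le> n" "real n * pi * eps < pi / 2" using that n_eps by auto
    obtain r where "real n * pi - pi / 2 < r" "r < real n * pi"
        "is_eigenfunction s eps (r\<^sup>2) (\<lambda>x. sin (r * x), \<lambda>j x. sin r / sin (r * eps) * sin (r * x))"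
      by (rule secular_eigenvalue[OF eps s n])
    thus ?thesis using eigen_sequence_eigenvalue[OF es] by blast
  qed
  then obtain r where r: "\<And>n. n \<in> {1..M} \<Longrightarrow> real n * pi - pi / 2 < r n \<and> r n < real n * pi"
    and eigenvalue: "\<And>n. n \<in> {1..M} \<Longrightarrow> (r n)\<^sup>2 \<in> range lam"
    by metis
  have r_pos: "0 < r n" if "n \<in> {1..M}" for n
  proof -
    have "1 * pi \<le> real n * pi" using that by (intro mult_right_mono) auto
    thus ?thesis using r[OF that] pi_gt_zero by linarith
  qed
  have "inj_on (\<lambda>n. (r n)\<^sup>2) {1..M}"
  proof (rule linorder_inj_onI')
    fix n n' assume n: "n \<in> {1..M}" and n': "n' \<in> {1..M}" and "n < n'"
    hence "(real n + 1) * pi \<le> real n' * pi" by (intro mult_right_mono) auto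
    hence "real n * pi + pi \<le> real n' * pi" by (simp add: distrib_right)
    hence "r n < r n'" using r[OF n] r[OF n'] by linarith
    thus "(r n)\<^sup>2 \<noteq> (r n')\<^sup>2" using r_pos[OF n] power_strict_mono[of "r n" "r n'" 2] by simp
  qed
  hence card: "card ((\<lambda>n. (r n)\<^sup>2) ` {1..M}) = M" by (simp add: card_image)
  have below: "(r n)\<^sup>2 < (real M * pi)\<^sup>2" if "n \<in> {1..M}" for n
  proof -
    have "real n * pi \<le> real M * pi" using that by (intro mult_right_mono) auto
    hence "r n < real M * pi" using r[OF that] by linarith
    thus ?thesis using r_pos[OF that] by (intro power_strict_mono) auto
  qed
  show ?thesis
    by (rule mono_less_if_many_values_below[OF eigen_sequenceD(1)[OF es], of "(\<lambda>n. (r n)\<^sup>2) ` {1..M}"])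
      (use card below eigenvalue M in auto)
qed

lemma eigen_sequence_low_frequencies:
  assumes es: "eigen_sequence s eps lam f" and eps: "0 < eps" and s: "0 < s"
    and M_eps: "real M * eps < 1 / 2" and i: "i < M"
  shows "0 < sqrt (lam i) \<and> sqrt (lam i) * eps < pi / 2"
proof
  show "0 < sqrt (lam i)" using eigenvalue_pos[OF eigen_sequenceD(2)[OF es] eps] by simp
  have "lam i \<le> lam (M - 1)" using eigen_sequenceD(1)[OF es] i by (simp add: monoD)
  also have "\<dots> < (real M * pi)\<^sup>2" using eigen_sequence_low_eigenvalues[OF es eps s _ M_eps] i by simp
  finally have "sqrt (lam i) < sqrt ((real M * pi)\<^sup>2)" by (rule real_sqrt_less_mono)
  hence "sqrt (lam i) < real M * pi" by simp
  hence "sqrt (lam i) * eps < real M * pi * eps" using eps by simp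
  also have "\<dots> < pi / 2" using M_eps pi_gt_zero mult_strict_left_mono[of "real M * eps" "1/2" pi] by simp
  finally show "sqrt (lam i) * eps < pi / 2" .
qed

lemma eigen_sequence_frequencies_inj:
  assumes es: "eigen_sequence s eps lam f" and eps: "0 < eps"
    and sin_eps: "\<forall>i\<in>I. sin (sqrt (lam i) * eps) \<noteq> 0"
  shows "inj_on (\<lambda>i. sqrt (lam i)) I"
proof (rule inj_onI, rule ccontr)
  fix i i' assume i: "i \<in> I" "i' \<in> I" and same: "sqrt (lam i) = sqrt (lam i')" and "i \<noteq> i'"
  define k where "k = sqrt (lam i)"
  note ef = eigen_sequenceD(2)[OF es, of i] eigen_sequenceD(2)[OF es, of i']
  have k: "0 < k" using eigenvalue_pos[OF ef(1) eps] unfolding k_def by simp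
  have sin_k: "sin (k * eps) \<noteq> 0" using sin_eps i unfolding k_def by blast
  obtain P where P: "P \<noteq> 0" "sin k \<noteq> 0" "\<forall>x\<in>{0..1}. fst (f i) x = P * sin (k * x)"
      "\<forall>j<s. \<forall>x\<in>{0..eps}. snd (f i) j x = P * (sin k / sin (k * eps)) * sin (k * x)"
    by (rule eigenfunction_sin_form[OF ef(1) eps sin_k[unfolded k_def], folded k_def])
  obtain P' where P': "P' \<noteq> 0" "sin k \<noteq> 0" "\<forall>x\<in>{0..1}. fst (f i') x = P' * sin (k * x)"
      "\<forall>j<s. \<forall>x\<in>{0..eps}. snd (f i') j x = P' * (sin k / sin (k * eps)) * sin (k * x)"
    by (rule eigenfunction_sin_form[OF ef(2) eps sin_k[unfolded k_def same], folded same k_def])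
  have "graph_inner s eps (f i) (f i') \<noteq> 0"
    by (rule graph_inner_sin_forms_neq_0[OF k P(1) P'(1) P(3,4) P'(3,4)])
  thus False using eigen_sequenceD(3)[OF es \<open>i \<noteq> i'\<close>] by contradiction
qed

lemma card_small_zeros:
  assumes edges: "\<forall>j<s. \<forall>x. 0 < x \<and> x < eps \<longrightarrow> snd g j x = \<psi> x" and centre: "fst g 1 \<noteq> 0"
    and fin: "finite {x. 0 < x \<and> x < eps \<and> \<psi> x = 0}"
  shows "finite (small_zeros s eps g) \<and>
    card (small_zeros s eps g) = s * card {x. 0 < x \<and> x < eps \<and> \<psi> x = 0}"
proof -
  define T where "T = {x. 0 < x \<and> x < eps \<and> \<psi> x = 0}"
  have "small_zeros s eps g = {SmallPt j x | j x. j < s \<and> x \<in> T}"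
    unfolding small_zeros_def T_def using edges centre by auto
  also have "\<dots> = (\<lambda>(j, x). SmallPt j x) ` ({..<s} \<times> T)" by auto
  finally have zeros: "small_zeros s eps g = (\<lambda>(j, x). SmallPt j x) ` ({..<s} \<times> T)" .
  have "inj_on (\<lambda>(j, x). SmallPt j x) ({..<s} \<times> T)" by (auto simp: inj_on_def)
  thus ?thesis using fin unfolding zeros T_def[symmetric] by (simp add: card_image card_cartesian_product)
qed

lemma nodal_combination_exists:
  assumes es: "eigen_sequence s eps lam f" and eps: "0 < eps" and s: "0 < s"
    and M_eps: "real M * eps < 1 / 2" and L: "1 \<le> L" "L \<le> M"
  obtains c where "finite (small_zeros s eps (gsum c f {..<L}))"
    "card (small_zeros s eps (gsum c f {..<L})) = s * (L - 1)"
proof -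
  define k where "k i = sqrt (lam i)" for i
  have k: "0 < k i \<and> k i * eps < pi / 2" if "i < L" for i
    unfolding k_def using eigen_sequence_low_frequencies[OF es eps s M_eps] that L by simp
  have sin_eps: "0 < sin (k i * eps)" if "i < L" for i
  proof (rule sin_gt_zero)
    show "0 < k i * eps" using k[OF that] eps by simp
    show "k i * eps < pi" using k[OF that] pi_gt_zero by linarith
  qed
  have "inj_on k {..<L}"
    using sin_eps unfolding k_def
    by (intro eigen_sequence_frequencies_inj[OF es eps]) (metis lessThan_iff less_irrefl)
  then obtain d where zeros: "finite {x. 0 < x \<and> x < eps \<and> (\<Sum>i<L. d i * sin (k i * x)) = 0}"
      "card {x. 0 < x \<and> x < eps \<and> (\<Sum>i<L. d i * sin (k i * x)) = 0} = L - 1"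
    and centre: "(\<Sum>i<L. d i * sin (k i * eps)) \<noteq> 0"
    using sine_sum_prescribed_zero_count[OF eps L(1)] k by blast
  have "\<exists>Q. Q \<noteq> 0 \<and> (\<forall>j<s. \<forall>x\<in>{0..eps}. snd (f i) j x = Q * sin (k i * x))" if "i < L" for i
  proof -
    have "sin (sqrt (lam i) * eps) \<noteq> 0" using sin_eps[OF that] unfolding k_def by simp
    then obtain Q where "Q \<noteq> 0" "\<forall>j<s. \<forall>x\<in>{0..eps}. snd (f i) j x = Q * sin (sqrt (lam i) * x)"
      by (rule eigenfunction_small_edge_form[OF eigen_sequenceD(2)[OF es] eps])
    thus ?thesis unfolding k_def by blast
  qed
  then obtain Q where Q: "\<And>i. i < L \<Longrightarrow> Q i \<noteq> 0"
    "\<And>i j x. i < L \<Longrightarrow> j < s \<Longrightarrow> x \<in> {0..eps} \<Longrightarrow> snd (f i) j x = Q i * sin (k i * x)"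
    by metis
  define G where "G = gsum (\<lambda>i. d i / Q i) f {..<L}"
  have edges: "snd G j x = (\<Sum>i<L. d i * sin (k i * x))" if "j < s" "x \<in> {0..eps}" for j x
    unfolding G_def gsum_def snd_conv
  proof (intro sum.cong refl)
    fix i assume "i \<in> {..<L}"
    thus "d i / Q i * snd (f i) j x = d i * sin (k i * x)" using Q[of i] that by simp
  qed
  have "fst G 1 = snd G 0 eps"
    using eigen_sequenceD(2)[OF es] s unfolding G_def gsum_def is_eigenfunction_def by simp
  hence "fst G 1 \<noteq> 0" using edges[of 0 eps] s eps centre by simp
  moreover have "\<forall>j<s. \<forall>x. 0 < x \<and> x < eps \<longrightarrow> snd G j x = (\<Sum>i<L. d i * sin (k i * x))"
    using edges by simp
  ultimately have "finite (small_zeros s eps G) \<and> card (small_zeros s eps G) = s * (L - 1)"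
    using card_small_zeros[OF _ _ zeros(1)] zeros(2) by simp
  thus thesis using that unfolding G_def by blast
qed

theorem proposition16:
  fixes M s :: nat
  assumes "M > 0" and "s > 0"
  shows "\<exists>eps1 > 0. \<forall>eps L. 0 < eps \<and> eps < eps1 \<and> 1 \<le> L \<and> L \<le> M \<longrightarrow>
           (\<forall>lam f. eigen_sequence s eps lam f \<longrightarrow>
              (\<exists>c. finite (small_zeros s eps (gsum c f {..<L})) \<and>
                   card (small_zeros s eps (gsum c f {..<L})) = L - 1 + (L - 1) * (s - 1)))"
proof (intro exI[of _ "1 / (2 * real M)"] conjI allI impI)
  show "0 < 1 / (2 * real M)" using assms by simp
  fix eps L lam f
  assume "0 < eps \<and> eps < 1 / (2 * real M) \<and> 1 \<le> L \<and> L \<le> M" and es: "eigen_sequence s eps lam f"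
  hence eps: "0 < eps" "real M * eps < 1 / 2" and L: "1 \<le> L" "L \<le> M"
    using assms by (auto simp: field_simps)
  obtain c where "finite (small_zeros s eps (gsum c f {..<L}))"
      "card (small_zeros s eps (gsum c f {..<L})) = s * (L - 1)"
    using nodal_combination_exists[OF es eps(1) \<open>s > 0\<close> eps(2) L] .
  moreover have "s * (L - 1) = L - 1 + (L - 1) * (s - 1)" using \<open>s > 0\<close> by (cases s) auto
  ultimately show "\<exists>c. finite (small_zeros s eps (gsum c f {..<L})) \<and>
      card (small_zeros s eps (gsum c f {..<L})) = L - 1 + (L - 1) * (s - 1)" by auto
qed

end
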